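(* Let $q\ge3$, $G\in\mathbb G^q$, $S=\Psi(G)$ with core $C$. Let $w$ be a white vertex of $S$ that belongs to $C$ and is not a chain-vertex of $C$. If at least one core-chain of $C$ incident to $w$ contains at least one internal white vertex, then $w$ is admissible.
   Context: Fix an integer $q\ge 2$. A $(q+1)$-edge-colored graph (colored graph) is a finite connected graph, multiple edges allowed and no loops, whose edges carry colors in $\{0,1,\dots,q\}$ such that every vertex is incident to exactly one edge of each color. It is rooted if one color-0 edge is distinguished and oriented; it is bipartite if its vertices can be colored black and white so that every edge joins a black and a white vertex, with the convention that the origin of the root edge is black. $\mathbb G^q$ denotes the set of rooted bipartite colored graphs. Constellations: given $G\in\mathbb G^q$, its constellation $S=\Psi(G)$ is obtained as follows: orient every edge from its black to its white endpoint; contract every color-0 edge into a single vertex, called a white vertex of $S$ (the one coming from the root edge is the root vertex). For each $i\in\{1,\dots,q\}$ the color-$i$ edges now form directed cycles; for each such cycle, passing through white vertices $w_1,\dots,w_p$ in this cyclic order, add a new vertex of color $i$ joined by one color-$i$ edge to each $w_k$, equip the new vertex with the cyclic order $(w_1,\dots,w_p)$ of its incident edges, and delete the original color-$i$ edges of the cycle. Core: the core $C$ of $S$ is obtained by repeatedly deleting a vertex of degree $1$ other than the root vertex, together with its incident edge, until every non-root vertex has degree at least 2; a vertex of $S$ belongs to $C$ if it is not deleted. A chain-vertex of $C$ is a non-root vertex of degree $2$ in $C$; a core-chain is a path of $C$ (possibly closed) whose internal vertices are chain-vertices and whose extremities are not chain-vertices. A white vertex $w$ of $S=\Psi(G)$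 is admissible if the two endpoints of the color-0 edge of $G$ contracted to $w$ are joined in $G$ by a path containing no color-0 edge. *)

theory Defs
  imports Main
begin

text \<open>A rooted bipartite (q+1)-edge-colored graph: vertex set, edge set, incidence
(each edge has a set of exactly two endpoints, so no loops, multiple edges allowed),
edge colors, the distinguished root edge, the origin of its orientation, and the
set of black vertices of the bipartition.\<close>

record ('v, 'e) rbgraph =
  gV :: "'v set"
  gE :: "'e set"
  ginc :: "'e \<Rightarrow> 'v set"
  gcol :: "'e \<Rightarrow> nat"
  groot :: 'e
  gorig :: 'v
  gblack :: "'v set"

definition g_adj :: "('v, 'e) rbgraph \<Rightarrow> ('v \<times> 'v) set" where
  "g_adj G = {(x, y). \<exists>e\<in>gE G. ginc G e = {x, y}}"

definition colored_graph :: "nat \<Rightarrow> ('v, 'e) rbgraph \<Rightarrow> bool" where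
  "colored_graph q G \<longleftrightarrow>
     finite (gV G) \<and> finite (gE G) \<and> gV G \<noteq> {} \<and>
     (\<forall>e\<in>gE G. ginc G e \<subseteq> gV G \<and> card (ginc G e) = 2 \<and> gcol G e \<le> q) \<and>
     (\<forall>v\<in>gV G. \<forall>i\<le>q. \<exists>!e. e \<in> gE G \<and> v \<in> ginc G e \<and> gcol G e = i) \<and>
     (\<forall>u\<in>gV G. \<forall>v\<in>gV G. (u, v) \<in> (g_adj G)\<^sup>*)"

definition in_Gq :: "nat \<Rightarrow> ('v, 'e) rbgraph \<Rightarrow> bool" where
  "in_Gq q G \<longleftrightarrow>
     colored_graph q G \<and>
     groot G \<in> gE G \<and> gcol G (groot G) = 0 \<and> gorig G \<in> ginc G (groot G) \<and>
     gblack G \<subseteq> gV G \<and> (\<forall>e\<in>gE G. card (ginc G e \<inter> gblack G) = 1) \<and>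
     gorig G \<in> gblack G"

definition blackend :: "('v, 'e) rbgraph \<Rightarrow> 'e \<Rightarrow> 'v" where
  "blackend G e = (THE x. x \<in> ginc G e \<and> x \<in> gblack G)"

definition whiteend :: "('v, 'e) rbgraph \<Rightarrow> 'e \<Rightarrow> 'v" where
  "whiteend G e = (THE x. x \<in> ginc G e \<and> x \<notin> gblack G)"

definition edge_at :: "('v, 'e) rbgraph \<Rightarrow> 'v \<Rightarrow> nat \<Rightarrow> 'e" where
  "edge_at G v i = (THE e. e \<in> gE G \<and> v \<in> ginc G e \<and> gcol G e = i)"

text \<open>Color-0 edges = vertices obtained by contracting color-0 edges.\<close>
definition zero_edges :: "('v, 'e) rbgraph \<Rightarrow> 'e set" where
  "zero_edges G = {e \<in> gE G. gcol G e = 0}"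

text \<open>After contracting color-0 edges, the color-i edge leaving (black to white) the
contracted vertex e goes to the contracted vertex of its white endpoint.\<close>
definition carc :: "('v, 'e) rbgraph \<Rightarrow> nat \<Rightarrow> ('e \<times> 'e) set" where
  "carc G i = {(e, edge_at G (whiteend G (edge_at G (blackend G e) i)) 0) | e. e \<in> zero_edges G}"

text \<open>The (set of white vertices on the) directed color-i cycle through e.\<close>
definition ccycle :: "('v, 'e) rbgraph \<Rightarrow> nat \<Rightarrow> 'e \<Rightarrow> 'e set" where
  "ccycle G i e = {e'. (e, e') \<in> (carc G i)\<^sup>*}"

datatype 'e cvert = WV 'e | CV nat "'e set"

text \<open>Vertices of the constellation: white vertices and one vertex of color i per
color-i cycle (identified by color and set of white vertices on the cycle).\<close>
definition const_verts :: "nat \<Rightarrow> ('v, 'e) rbgraph \<Rightarrow> 'e cvert set" where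
  "const_verts q G = WV ` zero_edges G \<union>
     {CV i (ccycle G i e) | i e. 1 \<le> i \<and> i \<le> q \<and> e \<in> zero_edges G}"

text \<open>Adjacency of the constellation: a white vertex is joined to the color-i vertex
of the cycle it lies on (one edge; the constellation is a simple graph).\<close>
definition const_adj :: "nat \<Rightarrow> ('v, 'e) rbgraph \<Rightarrow> 'e cvert \<Rightarrow> 'e cvert \<Rightarrow> bool" where
  "const_adj q G x y \<longleftrightarrow>
     (\<exists>e i. e \<in> zero_edges G \<and> 1 \<le> i \<and> i \<le> q \<and>
        ((x = WV e \<and> y = CV i (ccycle G i e)) \<or> (y = WV e \<and> x = CV i (ccycle G i e))))"

definition const_root :: "('v, 'e) rbgraph \<Rightarrow> 'e cvert" where
  "const_root G = WV (groot G)"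

definition prune_step :: "('a \<Rightarrow> 'a \<Rightarrow> bool) \<Rightarrow> 'a \<Rightarrow> ('a set \<times> 'a set) set" where
  "prune_step adj rt = {(R, R - {v}) | R v. v \<in> R \<and> v \<noteq> rt \<and> card {u \<in> R. adj v u} = 1}"

text \<open>C is (the vertex set of) a core: result of repeatedly deleting non-root degree-1
vertices until every non-root vertex has degree at least 2.  The core graph is the
subgraph induced on C.\<close>
definition is_core :: "'a set \<Rightarrow> ('a \<Rightarrow> 'a \<Rightarrow> bool) \<Rightarrow> 'a \<Rightarrow> 'a set \<Rightarrow> bool" where
  "is_core V adj rt C \<longleftrightarrow>
     (V, C) \<in> (prune_step adj rt)\<^sup>* \<and> (\<forall>v\<in>C. v \<noteq> rt \<longrightarrow> card {u \<in> C. adj v u} \<ge> 2)"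

definition chain_vertex :: "('a \<Rightarrow> 'a \<Rightarrow> bool) \<Rightarrow> 'a \<Rightarrow> 'a set \<Rightarrow> 'a \<Rightarrow> bool" where
  "chain_vertex adj rt C v \<longleftrightarrow> v \<in> C \<and> v \<noteq> rt \<and> card {u \<in> C. adj v u} = 2"

text \<open>A core-chain, as the list of its vertices (a path of C, possibly closed:
first = last allowed; no edge repeated).\<close>
definition core_chain :: "('a \<Rightarrow> 'a \<Rightarrow> bool) \<Rightarrow> 'a \<Rightarrow> 'a set \<Rightarrow> 'a list \<Rightarrow> bool" where
  "core_chain adj rt C vs \<longleftrightarrow>
     length vs \<ge> 2 \<and> set vs \<subseteq> C \<and>
     (\<forall>j. Suc j < length vs \<longrightarrow> adj (vs ! j) (vs ! Suc j)) \<and>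
     distinct (butlast vs) \<and> distinct (tl vs) \<and>
     (length vs = 3 \<longrightarrow> hd vs \<noteq> last vs) \<and>
     (\<forall>j. 0 < j \<and> j < length vs - 1 \<longrightarrow> chain_vertex adj rt C (vs ! j)) \<and>
     \<not> chain_vertex adj rt C (hd vs) \<and> \<not> chain_vertex adj rt C (last vs)"

definition admissible :: "('v, 'e) rbgraph \<Rightarrow> 'e \<Rightarrow> bool" where
  "admissible G e \<longleftrightarrow>
     (\<forall>a b. ginc G e = {a, b} \<longrightarrow>
        (a, b) \<in> {(x, y). \<exists>f\<in>gE G. gcol G f \<noteq> 0 \<and> ginc G f = {x, y}}\<^sup>*)"

end

theory Submission
  imports Defs "HOL-Combinatorics.Cycles"
begin

text \<open>A white vertex of S is a colour-0 edge of G, and it is admissible when its two ends are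
joined avoiding colour 0. Going once round a colour-i cycle of S alternates colour-i edges and
colour-0 edges of G, so a white vertex whose cycle-mates are all admissible is admissible itself.
During the pruning to the core every deleted white vertex, and every white neighbour of a deleted
colour vertex, is admissible: a deleted white vertex has lost one of its \<open>q \<ge> 2\<close> colour
neighbours, and a deleted colour vertex has at most one surviving white neighbour, whose cycle-mates
are then all gone. On a core-chain leaving w, the next vertex is a colour vertex c of degree 2 in
the core, followed by a white chain-vertex y. Since \<open>2 < q\<close>, y has lost a colour neighbour and
is admissible, while the other cycle-mates of w around c lie outside the core; hence w is
admissible.\<close>

lemma edge_at:
  assumes "in_Gq q G" "v \<in> gV G" "i \<le> q"
  shows "edge_at G v i \<in> gE G" "v \<in> ginc G (edge_at G v i)" "gcol G (edge_at G v i) = i"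
proof -
  have "\<exists>!e. e \<in> gE G \<and> v \<in> ginc G e \<and> gcol G e = i"
    using assms unfolding in_Gq_def colored_graph_def by blast
  then have "edge_at G v i \<in> gE G \<and> v \<in> ginc G (edge_at G v i) \<and> gcol G (edge_at G v i) = i"
    unfolding edge_at_def by (rule theI')
  then show "edge_at G v i \<in> gE G" "v \<in> ginc G (edge_at G v i)" "gcol G (edge_at G v i) = i"
    by auto
qed

lemma edge_at_eqI:
  assumes "in_Gq q G" "v \<in> gV G" "e \<in> gE G" "v \<in> ginc G e" "gcol G e \<le> q"
  shows "edge_at G v (gcol G e) = e"
proof -
  have "\<exists>!e'. e' \<in> gE G \<and> v \<in> ginc G e' \<and> gcol G e' = gcol G e"
    using assms unfolding in_Gq_def colored_graph_def by blast
  then show ?thesis unfolding edge_at_def using assms(3,4) by (simp add: the1_equality)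
qed

lemma ginc_subset_gV: "in_Gq q G \<Longrightarrow> e \<in> gE G \<Longrightarrow> ginc G e \<subseteq> gV G"
  unfolding in_Gq_def colored_graph_def by auto

lemma edge_ends:
  assumes "in_Gq q G" "e \<in> gE G"
  shows "ginc G e = {blackend G e, whiteend G e}"
    and "blackend G e \<in> gblack G" and "whiteend G e \<notin> gblack G"
proof -
  have two: "card (ginc G e) = 2" and one: "card (ginc G e \<inter> gblack G) = 1"
    using assms unfolding in_Gq_def colored_graph_def by auto
  obtain b where b: "ginc G e \<inter> gblack G = {b}"
    using one by (auto simp: card_1_singleton_iff)
  obtain x y where xy: "ginc G e = {x, y}" "x \<noteq> y"
    using two by (auto simp: card_2_iff)
  then obtain w where bw: "ginc G e = {b, w}" "w \<noteq> b"
    using b by (metis Int_iff insert_commute insertCI empty_iff insertE)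
  have w: "w \<notin> gblack G"
    using b bw by blast
  have "blackend G e = b"
    unfolding blackend_def using b by blast
  moreover have "whiteend G e = w"
    unfolding whiteend_def using b bw w by (intro the_equality) auto
  ultimately show "ginc G e = {blackend G e, whiteend G e}"
    and "blackend G e \<in> gblack G" and "whiteend G e \<notin> gblack G"
    using b bw w by auto
qed

lemma blackend_eqI: "in_Gq q G \<Longrightarrow> e \<in> gE G \<Longrightarrow> v \<in> ginc G e \<Longrightarrow> v \<in> gblack G \<Longrightarrow> blackend G e = v"
  using edge_ends[of q G e] by auto

lemma whiteend_eqI: "in_Gq q G \<Longrightarrow> e \<in> gE G \<Longrightarrow> v \<in> ginc G e \<Longrightarrow> v \<notin> gblack G \<Longrightarrow> whiteend G e = v"
  using edge_ends[of q G e] by auto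

lemma ends_in_gV:
  assumes "in_Gq q G" "e \<in> gE G"
  shows "blackend G e \<in> gV G" "whiteend G e \<in> gV G"
  using edge_ends(1)[OF assms] ginc_subset_gV[OF assms] by auto

definition nonzero_rel :: "('v, 'e) rbgraph \<Rightarrow> ('v \<times> 'v) set" where
  "nonzero_rel G = {(x, y). \<exists>f\<in>gE G. gcol G f \<noteq> 0 \<and> ginc G f = {x, y}}"

lemma sym_nonzero_rel: "sym (nonzero_rel G)"
  unfolding nonzero_rel_def sym_def by (auto simp: insert_commute)

lemma admissible_iff_ends_joined:
  assumes "in_Gq q G" "e \<in> gE G"
  shows "admissible G e \<longleftrightarrow> (blackend G e, whiteend G e) \<in> (nonzero_rel G)\<^sup>*"
proof
  assume "(blackend G e, whiteend G e) \<in> (nonzero_rel G)\<^sup>*"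
  moreover have "sym ((nonzero_rel G)\<^sup>*)"
    by (simp add: sym_nonzero_rel sym_rtrancl)
  ultimately show "admissible G e"
    unfolding admissible_def nonzero_rel_def[symmetric] edge_ends(1)[OF assms]
    by (auto simp: doubleton_eq_iff dest: symD)
qed (simp add: admissible_def nonzero_rel_def edge_ends(1)[OF assms])

definition cycle_succ :: "('v, 'e) rbgraph \<Rightarrow> nat \<Rightarrow> 'e \<Rightarrow> 'e" where
  "cycle_succ G i e = edge_at G (whiteend G (edge_at G (blackend G e) i)) 0"

lemma carc_eq: "carc G i = {(e, cycle_succ G i e) | e. e \<in> zero_edges G}"
  unfolding carc_def cycle_succ_def ..

lemma edge_at_blackend:
  "in_Gq q G \<Longrightarrow> v \<in> gV G \<Longrightarrow> v \<in> gblack G \<Longrightarrow> i \<le> q \<Longrightarrow> blackend G (edge_at G v i) = v"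
  by (rule blackend_eqI) (auto intro: edge_at)

lemma edge_at_whiteend:
  "in_Gq q G \<Longrightarrow> v \<in> gV G \<Longrightarrow> v \<notin> gblack G \<Longrightarrow> i \<le> q \<Longrightarrow> whiteend G (edge_at G v i) = v"
  by (rule whiteend_eqI) (auto intro: edge_at)

lemma cycle_succ:
  assumes G: "in_Gq q G" and e: "e \<in> zero_edges G" and i: "1 \<le> i" "i \<le> q"
  shows "cycle_succ G i e \<in> zero_edges G"
    and "(blackend G e, whiteend G (cycle_succ G i e)) \<in> nonzero_rel G"
proof -
  have eE: "e \<in> gE G" using e by (simp add: zero_edges_def)
  define b where "b = blackend G e"
  define f where "f = edge_at G b i"
  define w where "w = whiteend G f"
  have b: "b \<in> gV G" "b \<in> gblack G"
    unfolding b_def using edge_ends[OF G eE] ends_in_gV[OF G eE] by auto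
  have f: "f \<in> gE G" "gcol G f = i" and bf: "blackend G f = b"
    unfolding f_def using edge_at[OF G b(1) i(2)] edge_at_blackend[OF G b i(2)] by auto
  have w: "w \<in> gV G" "w \<notin> gblack G"
    unfolding w_def using edge_ends[OF G f(1)] ends_in_gV[OF G f(1)] by auto
  have succ: "cycle_succ G i e = edge_at G w 0"
    by (simp add: cycle_succ_def b_def f_def w_def)
  show "cycle_succ G i e \<in> zero_edges G"
    unfolding succ zero_edges_def using edge_at[OF G w(1)] by simp
  have "ginc G f = {b, w}"
    using edge_ends(1)[OF G f(1)] bf by (simp add: w_def)
  then have "(b, w) \<in> nonzero_rel G"
    unfolding nonzero_rel_def using f i by (auto intro!: bexI[of _ f])
  then show "(blackend G e, whiteend G (cycle_succ G i e)) \<in> nonzero_rel G"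
    unfolding succ edge_at_whiteend[OF G w le0] b_def .
qed

lemma inj_on_cycle_succ:
  assumes G: "in_Gq q G" and i: "i \<le> q"
  shows "inj_on (cycle_succ G i) (zero_edges G)"
proof (rule inj_onI)
  fix e1 e2 assume "e1 \<in> zero_edges G" "e2 \<in> zero_edges G"
    and eq: "cycle_succ G i e1 = cycle_succ G i e2"
  then have e: "e1 \<in> gE G" "gcol G e1 = 0" "e2 \<in> gE G" "gcol G e2 = 0"
    by (auto simp: zero_edges_def)
  define b1 b2 where "b1 = blackend G e1" and "b2 = blackend G e2"
  define f1 f2 where "f1 = edge_at G b1 i" and "f2 = edge_at G b2 i"
  have b: "b1 \<in> gV G" "b1 \<in> gblack G" "b2 \<in> gV G" "b2 \<in> gblack G"
    unfolding b1_def b2_def using edge_ends(2)[OF G] ends_in_gV(1)[OF G] e(1,3) by simp_all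
  have f: "f1 \<in> gE G" "gcol G f1 = i" "f2 \<in> gE G" "gcol G f2 = i"
    unfolding f1_def f2_def using edge_at[OF G b(1) i] edge_at[OF G b(3) i] by auto
  have w: "whiteend G f1 \<in> gV G" "whiteend G f1 \<notin> gblack G"
    "whiteend G f2 \<in> gV G" "whiteend G f2 \<notin> gblack G"
    using edge_ends(3)[OF G] ends_in_gV(2)[OF G] f(1,3) by simp_all
  have "whiteend G f1 = whiteend G f2"
    using eq edge_at_whiteend[OF G w(1,2) le0] edge_at_whiteend[OF G w(3,4) le0]
    by (simp add: cycle_succ_def f1_def f2_def b1_def b2_def)
  then have "whiteend G f1 \<in> ginc G f1" "whiteend G f1 \<in> ginc G f2"
    using edge_ends(1)[OF G f(1)] edge_ends(1)[OF G f(3)] by auto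
  then have "edge_at G (whiteend G f1) i = f1" "edge_at G (whiteend G f1) i = f2"
    using edge_at_eqI[OF G w(1) f(1)] edge_at_eqI[OF G w(1) f(3)] f(2,4) i by auto
  then have "f1 = f2"
    by (rule trans[OF sym])
  moreover have "blackend G f1 = b1" "blackend G f2 = b2"
    unfolding f1_def f2_def using edge_at_blackend[OF G b(1,2) i] edge_at_blackend[OF G b(3,4) i] .
  ultimately have "b1 = b2"
    by simp
  moreover have "b1 \<in> ginc G e1" "b2 \<in> ginc G e2"
    using edge_ends(1)[OF G e(1)] edge_ends(1)[OF G e(3)] by (auto simp: b1_def b2_def)
  ultimately have "edge_at G b1 0 = e1" "edge_at G b1 0 = e2"
    using edge_at_eqI[OF G b(1) e(1)] edge_at_eqI[OF G b(3) e(3)] e(2,4) by auto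
  then show "e1 = e2"
    by (rule trans[OF sym])
qed

lemma funpow_returns_if_inj_on_finite:
  assumes fin: "finite A" and maps: "f ` A \<subseteq> A" and inj: "inj_on f A" and x: "x \<in> A"
  obtains n where "0 < n" "(f ^^ n) x = x"
proof -
  have bij: "bij_betw (f ^^ k) A A" for k
    using endo_inj_surj[OF fin maps inj] inj by (intro bij_betw_funpow) (simp add: bij_betw_def)
  have "card ((\<lambda>k. (f ^^ k) x) ` {..card A}) \<le> card A"
    using bij x by (intro card_mono fin) (auto dest: bij_betw_apply)
  then have "\<not> inj_on (\<lambda>k. (f ^^ k) x) {..card A}"
    using card_image by fastforce
  then obtain i j where ij: "i < j" "(f ^^ i) x = (f ^^ j) x"
    unfolding inj_on_def by (metis linorder_neqE_nat)
  have "j = i + (j - i)"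
    using ij(1) by simp
  then have "(f ^^ i) ((f ^^ (j - i)) x) = (f ^^ i) x"
    using ij(2) by (metis funpow_add o_apply)
  then have "(f ^^ (j - i)) x = x"
    using bij_betw_imp_inj_on[OF bij] bij x by (auto dest: bij_betw_apply inj_onD)
  with ij(1) show thesis
    using that[of "j - i"] by simp
qed

lemma carc_rtrancl_funpow:
  assumes G: "in_Gq q G" and i: "1 \<le> i" "i \<le> q" and a: "a \<in> zero_edges G"
  shows "(a, (cycle_succ G i ^^ n) a) \<in> (carc G i)\<^sup>*"
proof (induction n)
  case (Suc n)
  have "(cycle_succ G i ^^ n) a \<in> zero_edges G"
    using a cycle_succ(1)[OF G _ i] by (induction n) auto
  then have "((cycle_succ G i ^^ n) a, (cycle_succ G i ^^ Suc n) a) \<in> carc G i"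
    unfolding carc_eq by auto
  with Suc show ?case by simp
qed simp

lemma admissible_if_cycle_mates_admissible:
  assumes G: "in_Gq q G" and i: "1 \<le> i" "i \<le> q" and x: "x \<in> zero_edges G"
    and mates: "\<And>z. z \<in> zero_edges G \<Longrightarrow> ccycle G i z = ccycle G i x \<Longrightarrow> z \<noteq> x \<Longrightarrow> admissible G z"
  shows "admissible G x"
proof -
  let ?s = "cycle_succ G i" and ?R = "nonzero_rel G"
  define z where "z k = (?s ^^ k) x" for k
  have maps: "?s ` zero_edges G \<subseteq> zero_edges G"
    using cycle_succ(1)[OF G _ i] by blast
  have z_in: "z k \<in> zero_edges G" for k
    unfolding z_def using x maps by (induction k) auto
  have "finite (zero_edges G)"
    using G by (simp add: in_Gq_def colored_graph_def zero_edges_def)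
  then obtain n where "0 < n" "z n = x"
    using funpow_returns_if_inj_on_finite[OF _ maps inj_on_cycle_succ[OF G i(2)] x] z_def by metis
  define m where "m = least_power ?s x"
  have m: "0 < m" "z m = x"
    using least_powerI \<open>0 < n\<close> \<open>z n = x\<close> unfolding z_def m_def by metis+
  \<comment> \<open>From the black end of \<open>z k\<close>, a colour-i edge leads to the white end of \<open>z (Suc k)\<close>,
    and the admissibility of \<open>z (Suc k)\<close> leads on to its black end.\<close>
  have step: "(blackend G (z k), whiteend G (z (Suc k))) \<in> ?R" for k
    using cycle_succ(2)[OF G z_in i] by (simp add: z_def)
  have mate: "admissible G (z k)" if k: "0 < k" "k < m" for k
  proof (rule mates[OF z_in])
    show "z k \<noteq> x"
      using least_power_le[where f = ?s and n = k and x = x] k unfolding z_def m_def by fastforce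
    have "m = (m - k) + k"
      using k by simp
    then have "(?s ^^ (m - k)) (z k) = x"
      using m(2) unfolding z_def by (metis funpow_add o_apply)
    then have "(z k, x) \<in> (carc G i)\<^sup>*" "(x, z k) \<in> (carc G i)\<^sup>*"
      using carc_rtrancl_funpow[OF G i] z_in x unfolding z_def by metis+
    then show "ccycle G i (z k) = ccycle G i x"
      unfolding ccycle_def by (blast intro: rtrancl_trans)
  qed
  have walk: "(blackend G x, blackend G (z k)) \<in> ?R\<^sup>*" if "k < m" for k
    using that
  proof (induction k)
    case (Suc k)
    have "(blackend G (z (Suc k)), whiteend G (z (Suc k))) \<in> ?R\<^sup>*"
      using mate[of "Suc k"] Suc.prems admissible_iff_ends_joined[OF G] z_in
      by (simp add: zero_edges_def)
    then have "(whiteend G (z (Suc k)), blackend G (z (Suc k))) \<in> ?R\<^sup>*"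
      using sym_nonzero_rel sym_rtrancl by (metis symD)
    with Suc step[of k] show ?case
      by (meson Suc_lessD rtrancl_into_rtrancl rtrancl_trans)
  qed (simp add: z_def)
  have "Suc (m - 1) = m"
    using m(1) by simp
  then have "(blackend G x, whiteend G x) \<in> ?R\<^sup>*"
    using walk[of "m - 1"] step[of "m - 1"] m by (metis diff_less rtrancl_into_rtrancl zero_less_one)
  then show ?thesis
    using admissible_iff_ends_joined[OF G] x by (simp add: zero_edges_def)
qed

lemma const_adj_WV_iff:
  "const_adj q G (WV x) u \<longleftrightarrow> x \<in> zero_edges G \<and> (\<exists>i. 1 \<le> i \<and> i \<le> q \<and> u = CV i (ccycle G i x))"
  unfolding const_adj_def by auto

lemma const_adj_CV_WV_iff:
  "const_adj q G (CV i S) (WV z) \<longleftrightarrow> z \<in> zero_edges G \<and> 1 \<le> i \<and> i \<le> q \<and> S = ccycle G i z"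
  unfolding const_adj_def by auto

lemma const_adj_CV_imp_WV: "const_adj q G (CV i S) u \<Longrightarrow> \<exists>z. u = WV z"
  unfolding const_adj_def by auto

lemma WV_in_const_verts_iff: "WV x \<in> const_verts q G \<longleftrightarrow> x \<in> zero_edges G"
  unfolding const_verts_def by auto

lemma CV_in_const_verts:
  "x \<in> zero_edges G \<Longrightarrow> 1 \<le> i \<Longrightarrow> i \<le> q \<Longrightarrow> CV i (ccycle G i x) \<in> const_verts q G"
  unfolding const_verts_def by blast

lemma exists_color_neighbour_outside:
  assumes x: "x \<in> zero_edges G" and deg: "card {u \<in> R. const_adj q G (WV x) u} < q"
  obtains j where "1 \<le> j" "j \<le> q" "CV j (ccycle G j x) \<notin> R"
proof -
  let ?nbrs = "(\<lambda>j. CV j (ccycle G j x)) ` {1..q}"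
  have "{u \<in> R. const_adj q G (WV x) u} \<subseteq> ?nbrs"
    by (auto simp: const_adj_WV_iff)
  then have "finite {u \<in> R. const_adj q G (WV x) u}"
    by (rule finite_subset) simp
  moreover have "card ?nbrs = q"
    by (simp add: card_image inj_on_def)
  ultimately have "\<not> ?nbrs \<subseteq> {u \<in> R. const_adj q G (WV x) u}"
    using deg card_mono[of "{u \<in> R. const_adj q G (WV x) u}" ?nbrs] by linarith
  then obtain j where j: "j \<in> {1..q}" "CV j (ccycle G j x) \<notin> {u \<in> R. const_adj q G (WV x) u}"
    by blast
  moreover have "const_adj q G (WV x) (CV j (ccycle G j x))"
    using x j(1) by (auto simp: const_adj_WV_iff)
  ultimately show thesis
    using that by auto
qed

definition pruned_admissible :: "nat \<Rightarrow> ('v, 'e) rbgraph \<Rightarrow> 'e cvert set \<Rightarrow> bool" where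
  "pruned_admissible q G R \<longleftrightarrow>
     (\<forall>z. WV z \<in> const_verts q G - R \<longrightarrow> admissible G z) \<and>
     (\<forall>u z. u \<in> const_verts q G - R \<longrightarrow> const_adj q G u (WV z) \<longrightarrow> admissible G z)"

lemma admissible_if_few_neighbours_left:
  assumes inv: "pruned_admissible q G R" and x: "x \<in> zero_edges G"
    and deg: "card {u \<in> R. const_adj q G (WV x) u} < q"
  shows "admissible G x"
proof -
  obtain j where j: "1 \<le> j" "j \<le> q" "CV j (ccycle G j x) \<notin> R"
    using exists_color_neighbour_outside[OF x deg] .
  then have "CV j (ccycle G j x) \<in> const_verts q G - R"
    using CV_in_const_verts[OF x] by blast
  moreover have "const_adj q G (CV j (ccycle G j x)) (WV x)"
    using x j by (simp add: const_adj_CV_WV_iff)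
  ultimately show ?thesis
    using inv unfolding pruned_admissible_def by blast
qed

lemma admissible_if_cycle_mates_pruned:
  assumes G: "in_Gq q G" and inv: "pruned_admissible q G R"
    and i: "1 \<le> i" "i \<le> q" and x: "x \<in> zero_edges G"
    and mates: "\<And>z. z \<in> zero_edges G \<Longrightarrow> ccycle G i z = ccycle G i x \<Longrightarrow> z \<noteq> x \<Longrightarrow> WV z \<in> R
      \<Longrightarrow> admissible G z"
  shows "admissible G x"
proof (rule admissible_if_cycle_mates_admissible[OF G i x])
  fix z assume z: "z \<in> zero_edges G" "ccycle G i z = ccycle G i x" "z \<noteq> x"
  show "admissible G z"
  proof (cases "WV z \<in> R")
    case False
    then show ?thesis
      using inv z(1) unfolding pruned_admissible_def by (simp add: WV_in_const_verts_iff)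
  qed (use mates z in blast)
qed

lemma pruned_admissible_prune_step:
  assumes G: "in_Gq q G" and q: "2 \<le> q"
    and step: "(R, R') \<in> prune_step (const_adj q G) (const_root G)"
    and inv: "pruned_admissible q G R"
  shows "pruned_admissible q G R'"
proof -
  obtain v where v: "R' = R - {v}" "card {u \<in> R. const_adj q G v u} = 1"
    using step unfolding prune_step_def by blast
  have removed_white: "admissible G z" if "v = WV z" "z \<in> zero_edges G" for z
    using admissible_if_few_neighbours_left[OF inv that(2)] v(2) q that(1) by simp
  have removed_neighbour: "admissible G z" if adj: "const_adj q G v (WV z)" for z
  proof -
    obtain i S where vCV: "v = CV i S"
      using adj unfolding const_adj_def by blast
    then have z: "z \<in> zero_edges G" "1 \<le> i" "i \<le> q" "S = ccycle G i z"
      using adj by (simp_all add: const_adj_CV_WV_iff)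
    obtain u0 where u0: "{u \<in> R. const_adj q G v u} = {u0}"
      using v(2) by (auto simp: card_1_singleton_iff)
    show ?thesis
    proof (cases "WV z \<in> R")
      case False
      then show ?thesis
        using inv z(1) unfolding pruned_admissible_def by (simp add: WV_in_const_verts_iff)
    next
      case True
      then have "WV z = u0"
        using u0 adj by blast
      show ?thesis
      proof (rule admissible_if_cycle_mates_pruned[OF G inv z(2,3,1)])
        fix z' assume z': "z' \<in> zero_edges G" "ccycle G i z' = ccycle G i z" "z' \<noteq> z" "WV z' \<in> R"
        then have "WV z' = u0"
          using u0 vCV z by (auto simp: const_adj_CV_WV_iff)
        with \<open>WV z = u0\<close> z'(3) show "admissible G z'"
          by auto
      qed
    qed
  qed
  show ?thesis
    using inv removed_white removed_neighbour v(1)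
    unfolding pruned_admissible_def by (auto simp: WV_in_const_verts_iff)
qed

lemma pruned_admissible_core:
  assumes G: "in_Gq q G" and q: "2 \<le> q"
    and core: "is_core (const_verts q G) (const_adj q G) (const_root G) C"
  shows "pruned_admissible q G C"
proof -
  have "(const_verts q G, C) \<in> (prune_step (const_adj q G) (const_root G))\<^sup>*"
    using core unfolding is_core_def by blast
  then show ?thesis
  proof (induction rule: rtrancl_induct)
    case base
    then show ?case
      by (simp add: pruned_admissible_def)
  next
    case (step R R')
    then show ?case
      using pruned_admissible_prune_step[OF G q] by blast
  qed
qed

lemma chain_vertex_neighbours:
  assumes "chain_vertex adj rt C v" "a \<in> C" "b \<in> C" "adj v a" "adj v b" "a \<noteq> b"
  shows "{u \<in> C. adj v u} = {a, b}"
proof -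
  have "card {u \<in> C. adj v u} = 2"
    using assms(1) by (simp add: chain_vertex_def)
  moreover from this have "finite {u \<in> C. adj v u}"
    by (intro card_ge_0_finite) simp
  ultimately show ?thesis
    using assms(2-6) by (intro card_subset_eq[symmetric]) auto
qed

lemma core_chain_from_white:
  assumes chain: "core_chain (const_adj q G) rt C vs" and hd: "hd vs = WV e"
    and white: "\<exists>j f. 0 < j \<and> j < length vs - 1 \<and> vs ! j = WV f"
  obtains i y where "e \<in> zero_edges G" "1 \<le> i" "i \<le> q" "y \<in> zero_edges G"
    "ccycle G i y = ccycle G i e" "y \<noteq> e"
    "chain_vertex (const_adj q G) rt C (CV i (ccycle G i e))"
    "chain_vertex (const_adj q G) rt C (WV y)"
proof -
  let ?adj = "const_adj q G"
  have path: "\<And>j. Suc j < length vs \<Longrightarrow> ?adj (vs ! j) (vs ! Suc j)"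
    and internal: "\<And>j. 0 < j \<Longrightarrow> j < length vs - 1 \<Longrightarrow> chain_vertex ?adj rt C (vs ! j)"
    and dist: "distinct (butlast vs)" and len: "2 \<le> length vs"
    using chain unfolding core_chain_def by auto
  have v0: "vs ! 0 = WV e"
    using hd len by (metis hd_conv_nth list.size(3) not_numeral_le_zero)
  then obtain i where i: "1 \<le> i" "i \<le> q" "vs ! 1 = CV i (ccycle G i e)" and e: "e \<in> zero_edges G"
    using path[of 0] len by (auto simp: const_adj_WV_iff)
  obtain j f where j: "0 < j" "j < length vs - 1" "vs ! j = WV f"
    using white by blast
  with i(3) have "3 < length vs"
    by (cases "j = 1") auto
  then have adj12: "?adj (CV i (ccycle G i e)) (vs ! 2)"
    using path[of 1] i(3) by (simp add: numeral_2_eq_2)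
  then obtain y where y2: "vs ! 2 = WV y"
    using const_adj_CV_imp_WV by blast
  then have y: "y \<in> zero_edges G" "ccycle G i e = ccycle G i y"
    using adj12 by (simp_all add: const_adj_CV_WV_iff)
  have "butlast vs ! 0 \<noteq> butlast vs ! 2"
    using dist \<open>3 < length vs\<close> by (simp add: nth_eq_iff_index_eq)
  then have "y \<noteq> e"
    using \<open>3 < length vs\<close> v0 y2 by (simp add: nth_butlast)
  moreover have "chain_vertex ?adj rt C (vs ! 1)" "chain_vertex ?adj rt C (vs ! 2)"
    using internal \<open>3 < length vs\<close> by simp_all
  ultimately show thesis
    using that e i y y2 by simp
qed

theorem mainTheorem9:
  fixes q :: nat and G :: "('v, 'e) rbgraph" and C :: "'e cvert set"
    and e :: 'e and vs :: "'e cvert list"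
  assumes "q \<ge> 3"
    and "in_Gq q G"
    and "is_core (const_verts q G) (const_adj q G) (const_root G) C"
    and "WV e \<in> C"
    and "\<not> chain_vertex (const_adj q G) (const_root G) C (WV e)"
    and "core_chain (const_adj q G) (const_root G) C vs"
    and "hd vs = WV e"
    and "\<exists>j f. 0 < j \<and> j < length vs - 1 \<and> vs ! j = WV f"
  shows "admissible G e"
proof -
  note G = assms(2)
  let ?adj = "const_adj q G" and ?rt = "const_root G"
  have inv: "pruned_admissible q G C"
    using pruned_admissible_core[OF G _ assms(3)] assms(1) by simp
  obtain i y where e: "e \<in> zero_edges G" and i: "1 \<le> i" "i \<le> q" and y: "y \<in> zero_edges G"
    "ccycle G i y = ccycle G i e" "y \<noteq> e" and
    chain: "chain_vertex ?adj ?rt C (CV i (ccycle G i e))" "chain_vertex ?adj ?rt C (WV y)"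
    using core_chain_from_white[OF assms(6-8)] by metis
  have "admissible G y"
    using admissible_if_few_neighbours_left[OF inv y(1)] chain(2) assms(1)
    by (simp add: chain_vertex_def)
  moreover have "{u \<in> C. ?adj (CV i (ccycle G i e)) u} = {WV e, WV y}"
    using chain assms(4) e i y by (intro chain_vertex_neighbours)
      (auto simp: chain_vertex_def const_adj_CV_WV_iff)
  ultimately show ?thesis
    using e i by (intro admissible_if_cycle_mates_pruned[OF G inv i e])
      (auto simp: const_adj_CV_WV_iff)
qed

end
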